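(* Let $\Omega$ be a set of additive functions $\psi:\mathcal{C}\to\mathbb{R}$ satisfying $|\psi(\mathcal{L})|\le g_4(\mathcal{L})$ for all $\mathcal{L}\in\mathcal{C}$, and let $\nu_1,\nu_2:\mathcal{C}\to\mathbb{Z}$ be additive functions. If $\mathcal{K},\mathcal{J}\in\mathcal{C}$ satisfy $\nu_1(\mathcal{K})=1$ and $\nu_2(\mathcal{J})=1$, then \[\delta([\mathcal{K}],[\mathcal{J}])\ge\inf_{a,b\in\mathbb{Z},\ ab\neq0}\ \sup_{\psi\in\Omega}\ \big|a\psi(\mathcal{K})-b\psi(\mathcal{J})\big|.\]
   Context: $\mathcal{C}$ is the smooth knot concordance group; $g_4$ is the smooth four-genus; $d(\mathcal{K},\mathcal{J})=g_4(\mathcal{K}\,\#\,-\mathcal{J})$. Let $\mathcal{C}^\circ=\mathcal{C}\setminus\{0\}$; $\mathcal{K}\sim'\mathcal{J}$ if there exist $\mathcal{M}\in\mathcal{C}$ and $r,s\in\mathbb{Z}$ with $\mathcal{K}=r\mathcal{M}$, $\mathcal{J}=s\mathcal{M}$; $\sim$ is the equivalence relation generated by $\sim'$; $\mathbb{P}(\mathcal{C})=\mathcal{C}^\circ/\sim$. $\delta([\mathcal{K}],[\mathcal{J}])=\min\{d(\mathcal{K}',\mathcal{J}'):\mathcal{K}'\in[\mathcal{K}],\mathcal{J}'\in[\mathcal{J}]\}$. *)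

theory Defs
  imports Complex_Main "HOL-Library.Extended_Real"
begin

text \<open>The smooth concordance group is modelled abstractly as an abelian group
  (type class ab_group_add, written additively: connected sum is +, mirror-reverse is uminus,
  the unknot class is 0), together with a function g4 to the naturals (the smooth four-genus).\<close>

definition zsmul :: "int \<Rightarrow> 'a::ab_group_add \<Rightarrow> 'a" where
  "zsmul r M = (if 0 \<le> r then (\<Sum>_\<in>{..<nat r}. M) else - (\<Sum>_\<in>{..<nat (- r)}. M))"

definition additive :: "('a::ab_group_add \<Rightarrow> 'b::ab_group_add) \<Rightarrow> bool" where
  "additive f \<longleftrightarrow> (\<forall>x y. f (x + y) = f x + f y)"

definition dist4 :: "('a::ab_group_add \<Rightarrow> nat) \<Rightarrow> 'a \<Rightarrow> 'a \<Rightarrow> nat" where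
  "dist4 g4 K J = g4 (K + - J)"

definition sim1 :: "'a::ab_group_add \<Rightarrow> 'a \<Rightarrow> bool" where
  "sim1 K J \<longleftrightarrow> K \<noteq> 0 \<and> J \<noteq> 0 \<and> (\<exists>M r s. K = zsmul r M \<and> J = zsmul s M)"

text \<open>The equivalence class of K under the equivalence relation on C minus 0 generated by ~'
  (sim1 is reflexive and symmetric on nonzero elements, so its reflexive transitive closure
  restricted to nonzero elements is the generated equivalence).\<close>
definition proj_class :: "'a::ab_group_add \<Rightarrow> 'a set" where
  "proj_class K = {K'. K' \<noteq> 0 \<and> (K = K' \<or> (sim1\<^sup>*\<^sup>*) K K')}"

definition delta :: "('a::ab_group_add \<Rightarrow> nat) \<Rightarrow> 'a set \<Rightarrow> 'a set \<Rightarrow> nat" where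
  "delta g4 A B = Inf {dist4 g4 K' J' | K' J'. K' \<in> A \<and> J' \<in> B}"

end

theory Submission
  imports Defs
begin

text \<open>Elements of one class of \<open>\<sim>\<close> are linked by chains \<open>r M, s M\<close> with \<open>r s \<noteq> 0\<close>, so every
  additive \<open>\<psi>\<close> takes rationally proportional values on them; normalising by \<open>\<nu>\<^sub>1\<close> gives
  \<open>\<psi> K' = \<nu>\<^sub>1 K' \<psi> K\<close> for \<open>K' \<in> [K]\<close>, with \<open>\<nu>\<^sub>1 K' \<noteq> 0\<close>, and likewise for \<open>J\<close>. If
  \<open>K', J'\<close> realise \<open>\<delta>\<close>, then \<open>a = \<nu>\<^sub>1 K'\<close>, \<open>b = \<nu>\<^sub>2 J'\<close> is admissible in the infimum and
  \<open>|a \<psi> K - b \<psi> J| = |\<psi> (K' - J')| \<le> g\<^sub>4 (K' - J')\<close> for every \<open>\<psi> \<in> \<Omega>\<close>.\<close>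

lemma additive_zero:
  fixes f :: "'a::ab_group_add \<Rightarrow> 'b::ab_group_add"
  assumes "additive f"
  shows "f 0 = 0"
  using assms unfolding additive_def by (metis add.right_neutral add_left_cancel)

lemma additive_uminus:
  fixes f :: "'a::ab_group_add \<Rightarrow> 'b::ab_group_add"
  assumes "additive f"
  shows "f (- x) = - f x"
  using assms additive_zero[OF assms] unfolding additive_def
  by (metis add.right_inverse neg_eq_iff_add_eq_0)

lemma additive_add_uminus:
  fixes f :: "'a::ab_group_add \<Rightarrow> 'b::ab_group_add"
  assumes "additive f"
  shows "f (x + - y) = f x - f y"
  using assms additive_uminus[OF assms] unfolding additive_def
  by (metis diff_conv_add_uminus)

lemma additive_of_int_comp:
  assumes "additive (\<nu> :: 'a::ab_group_add \<Rightarrow> int)"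
  shows "additive (\<lambda>x. real_of_int (\<nu> x))"
  using assms unfolding additive_def by simp

lemma additive_sum_const:
  fixes f :: "'a::ab_group_add \<Rightarrow> 'b::ring_1"
  assumes "additive f"
  shows "f (\<Sum>_\<in>{..<n}. M) = of_nat n * f M"
proof (induction n)
  case 0
  then show ?case using additive_zero[OF assms] by simp
next
  case (Suc n)
  then show ?case using assms unfolding additive_def by (simp add: algebra_simps)
qed

lemma additive_zsmul:
  fixes f :: "'a::ab_group_add \<Rightarrow> 'b::ring_1"
  assumes "additive f"
  shows "f (zsmul r M) = of_int r * f M"
  unfolding zsmul_def
  using additive_sum_const[OF assms] additive_uminus[OF assms] by auto

lemma zsmul_zero_left [simp]: "zsmul 0 M = 0"
  unfolding zsmul_def by simp

text \<open>Proportionality is tested on real-valued additive maps rather than in the group itself,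
  so no arithmetic of \<open>zsmul\<close> beyond \<open>additive_zsmul\<close> is needed.\<close>

definition proportional :: "'a::ab_group_add \<Rightarrow> 'a \<Rightarrow> bool" where
  "proportional K K' \<longleftrightarrow> (\<exists>p p' :: int. p \<noteq> 0 \<and> p' \<noteq> 0 \<and>
     (\<forall>\<psi> :: 'a \<Rightarrow> real. additive \<psi> \<longrightarrow> of_int p * \<psi> K' = of_int p' * \<psi> K))"

lemma proportional_refl: "proportional K K"
  unfolding proportional_def by (intro exI[of _ 1]) simp

lemma proportional_trans:
  assumes "proportional K L" and "proportional L M"
  shows "proportional K M"
proof -
  obtain p p' :: int where p: "p \<noteq> 0" "p' \<noteq> 0"
    and KL: "\<And>\<psi> :: 'a \<Rightarrow> real. additive \<psi> \<Longrightarrow> of_int p * \<psi> L = of_int p' * \<psi> K"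
    using assms(1) unfolding proportional_def by blast
  obtain q q' :: int where q: "q \<noteq> 0" "q' \<noteq> 0"
    and LM: "\<And>\<psi> :: 'a \<Rightarrow> real. additive \<psi> \<Longrightarrow> of_int q * \<psi> M = of_int q' * \<psi> L"
    using assms(2) unfolding proportional_def by blast
  have "of_int (p * q) * \<psi> M = of_int (q' * p') * \<psi> K" if "additive \<psi>" for \<psi> :: "'a \<Rightarrow> real"
  proof -
    have "of_int (p * q) * \<psi> M = of_int q' * (of_int p * \<psi> L)"
      using LM[OF that] by (simp add: algebra_simps)
    also have "\<dots> = of_int (q' * p') * \<psi> K"
      using KL[OF that] by simp
    finally show ?thesis .
  qed
  with p q show ?thesis
    unfolding proportional_def by (intro exI[of _ "p * q"] exI[of _ "q' * p'"]) auto
qed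

lemma sim1_proportional:
  assumes "sim1 K K'"
  shows "proportional K K'"
proof -
  obtain M r s where nonzero: "K \<noteq> 0" "K' \<noteq> 0" and K: "K = zsmul r M" and K': "K' = zsmul s M"
    using assms unfolding sim1_def by blast
  have "r \<noteq> 0" "s \<noteq> 0"
    using nonzero K K' by auto
  moreover have "of_int r * \<psi> K' = of_int s * \<psi> K" if "additive \<psi>" for \<psi> :: "'a \<Rightarrow> real"
    using additive_zsmul[OF that] K K' by simp
  ultimately show ?thesis
    unfolding proportional_def by blast
qed

lemma proj_class_proportional:
  assumes "K' \<in> proj_class K"
  shows "proportional K K'"
proof -
  have "(sim1\<^sup>*\<^sup>*) K K'"
    using assms unfolding proj_class_def by auto
  then show ?thesis
    by (induction rule: rtranclp_induct)
       (auto intro: proportional_refl proportional_trans sim1_proportional)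
qed

lemma proportional_additive_normalised:
  fixes \<nu> :: "'a::ab_group_add \<Rightarrow> int"
  assumes "additive \<nu>" and "\<nu> K = 1" and "proportional K K'"
  shows "\<nu> K' \<noteq> 0"
    and "\<And>\<psi> :: 'a \<Rightarrow> real. additive \<psi> \<Longrightarrow> \<psi> K' = of_int (\<nu> K') * \<psi> K"
proof -
  obtain p p' :: int where p: "p \<noteq> 0" "p' \<noteq> 0"
    and ratio: "\<And>\<psi> :: 'a \<Rightarrow> real. additive \<psi> \<Longrightarrow> of_int p * \<psi> K' = of_int p' * \<psi> K"
    using assms(3) unfolding proportional_def by blast
  have "real_of_int (p * \<nu> K') = real_of_int p'"
    using ratio[OF additive_of_int_comp[OF assms(1)]] assms(2) by simp
  then have p'_eq: "p' = p * \<nu> K'"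
    by linarith
  then show "\<nu> K' \<noteq> 0"
    using p by auto
  fix \<psi> :: "'a \<Rightarrow> real"
  assume "additive \<psi>"
  then have "of_int p * \<psi> K' = of_int p * (of_int (\<nu> K') * \<psi> K)"
    using ratio p'_eq by simp
  then show "\<psi> K' = of_int (\<nu> K') * \<psi> K"
    using p by simp
qed

lemma self_in_proj_class: "K \<noteq> 0 \<Longrightarrow> K \<in> proj_class K"
  unfolding proj_class_def by simp

lemma delta_attained:
  assumes "K \<noteq> 0" and "J \<noteq> 0"
  obtains K' J' where "K' \<in> proj_class K" "J' \<in> proj_class J"
    and "delta g4 (proj_class K) (proj_class J) = dist4 g4 K' J'"
proof -
  have "{dist4 g4 K' J' | K' J'. K' \<in> proj_class K \<and> J' \<in> proj_class J} \<noteq> {}"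
    using assms self_in_proj_class by blast
  from Inf_nat_def1[OF this] show ?thesis
    using that unfolding delta_def by blast
qed

lemma abs_diff_le_dist4:
  assumes "additive \<psi>" and "\<forall>L. \<bar>\<psi> L\<bar> \<le> real (g4 L)"
  shows "\<bar>\<psi> K - \<psi> J\<bar> \<le> real (dist4 g4 K J)"
  using assms(2) additive_add_uminus[OF assms(1)] unfolding dist4_def by metis

theorem theorem7p3:
  fixes g4 :: "'c::ab_group_add \<Rightarrow> nat"
    and \<Omega> :: "('c \<Rightarrow> real) set"
    and \<nu>1 \<nu>2 :: "'c \<Rightarrow> int"
    and K J :: 'c
  assumes "\<forall>\<psi>\<in>\<Omega>. additive \<psi> \<and> (\<forall>L. \<bar>\<psi> L\<bar> \<le> real (g4 L))"
    and "additive \<nu>1" and "additive \<nu>2"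
    and "\<nu>1 K = 1" and "\<nu>2 J = 1"
  shows "ereal (real (delta g4 (proj_class K) (proj_class J)))
           \<ge> (INF ab\<in>{(a::int, b::int). a * b \<noteq> 0}.
                SUP \<psi>\<in>\<Omega>. ereal \<bar>real_of_int (fst ab) * \<psi> K - real_of_int (snd ab) * \<psi> J\<bar>)"
proof -
  have "K \<noteq> 0" "J \<noteq> 0"
    using assms(4,5) additive_zero[OF assms(2)] additive_zero[OF assms(3)] by auto
  then obtain K' J' where K': "K' \<in> proj_class K" and J': "J' \<in> proj_class J"
    and delta: "delta g4 (proj_class K) (proj_class J) = dist4 g4 K' J'"
    by (rule delta_attained)
  note K'_prop = proportional_additive_normalised[OF assms(2,4) proj_class_proportional[OF K']]
  note J'_prop = proportional_additive_normalised[OF assms(3,5) proj_class_proportional[OF J']]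
  have admissible: "(\<nu>1 K', \<nu>2 J') \<in> {(a::int, b::int). a * b \<noteq> 0}"
    using K'_prop(1) J'_prop(1) by simp
  have "(SUP \<psi>\<in>\<Omega>. ereal \<bar>real_of_int (\<nu>1 K') * \<psi> K - real_of_int (\<nu>2 J') * \<psi> J\<bar>)
        \<le> ereal (real (dist4 g4 K' J'))"
  proof (rule SUP_least)
    fix \<psi> assume "\<psi> \<in> \<Omega>"
    then have "additive \<psi>" and "\<forall>L. \<bar>\<psi> L\<bar> \<le> real (g4 L)"
      using assms(1) by auto
    with K'_prop(2) J'_prop(2) abs_diff_le_dist4[of \<psi> g4 K' J']
    show "ereal \<bar>real_of_int (\<nu>1 K') * \<psi> K - real_of_int (\<nu>2 J') * \<psi> J\<bar>
          \<le> ereal (real (dist4 g4 K' J'))" by simp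
  qed
  with admissible delta show ?thesis
    by (auto intro: INF_lower2)
qed

end
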